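(* Let $d\ge2$, $b:=2^d$, $N\in\mathbb{N}$, and $L:=\min\{\ell\in\{0,1,2,\dots\}:b^\ell\ge N\}$. Then $2^{-L}\le N^{-1/d}\le2\cdot2^{-L}$. For every $\ell\in\{0,1,\dots,L-2\}$ and every word $u\in\{0,\dots,b-1\}^\ell$, \[ \Bigl\lfloor\frac{N}{b^\ell}\Bigr\rfloor\le M(u)\le\Bigl\lceil\frac{N}{b^\ell}\Bigr\rceil. \] If $N>b^2$, then $M(u)\ge b$ for all words $u$ of length $L-2$.
   Context: $M(u):=\#\{1\le n\le N:x_n\in C_u\}$, where $(x_n)$ is the dyadic digital sequence and $C_u$ the dyadic cube defined as follows. For $a\in\{0,\dots,b-1\}$ write $a=\sum_{j=1}^d\varepsilon_j(a)2^{j-1}$ with $\varepsilon_j(a)\in\{0,1\}$; for $m\ge0$ write $m=\sum_{k\ge0}a_k(m)b^k$ with base-$b$ digits, all but finitely many zero. Set $x_n:=\bigl(\sum_{k\ge0}\varepsilon_1(a_k(n-1))2^{-(k+1)},\dots,\sum_{k\ge0}\varepsilon_d(a_k(n-1))2^{-(k+1)}\bigr)$, $n\ge1$. For $u=(u_0,\dots,u_{\ell-1})$, $C_u:=\prod_{j=1}^d\bigl[\sum_{k=0}^{\ell-1}\varepsilon_j(u_k)2^{-(k+1)},\sum_{k=0}^{\ell-1}\varepsilon_j(u_k)2^{-(k+1)}+2^{-\ell}\bigr)$; for $\ell=0$ the empty word gives $C_\varnothing=[0,1)^d$. *)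

theory Defs
  imports Complex_Main
begin

definition eps :: "nat \<Rightarrow> nat \<Rightarrow> nat" where
  "eps j a = (a div 2 ^ (j - 1)) mod 2"

definition digit :: "nat \<Rightarrow> nat \<Rightarrow> nat \<Rightarrow> nat" where
  "digit b k m = (m div b ^ k) mod b"

(* j-th coordinate (j = 1..d) of x_n, n >= 1, in base b = 2^d;
   the sum ranges over the finitely many nonzero digits (zero digits contribute 0) *)
definition xseq :: "nat \<Rightarrow> nat \<Rightarrow> nat \<Rightarrow> real" where
  "xseq d n j = (\<Sum>k\<in>{k. digit (2^d) k (n - 1) \<noteq> 0}.
                   real (eps j (digit (2^d) k (n - 1))) / 2 ^ (k + 1))"

definition cube_lo :: "nat list \<Rightarrow> nat \<Rightarrow> real" where
  "cube_lo u j = (\<Sum>k<length u. real (eps j (u ! k)) / 2 ^ (k + 1))"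

definition in_cube :: "nat \<Rightarrow> nat list \<Rightarrow> (nat \<Rightarrow> real) \<Rightarrow> bool" where
  "in_cube d u x \<longleftrightarrow> (\<forall>j\<in>{1..d}. cube_lo u j \<le> x j \<and> x j < cube_lo u j + 1 / 2 ^ length u)"

definition M :: "nat \<Rightarrow> nat \<Rightarrow> nat list \<Rightarrow> nat" where
  "M d N u = card {n \<in> {1..N}. in_cube d u (xseq d n)}"

end

theory Submission
  imports Defs
begin

(* Write n - 1 = m in base b = 2^d. Peeling off the leading digit halves both the cube C_u and
   every coordinate of x_n, and the halves [0,1/2), [1/2,1) are told apart by the leading bit; since
   a base-b digit is determined by its d bits, x_n lies in C_u exactly when the l lowest base-b digits
   of m spell u, i.e. when m is congruent modulo b^l to the number with digit word u. A residue
   class modulo b^l contains floor(N/b^l) or ceiling(N/b^l) of the integers 0, ..., N - 1.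
   Everything else is arithmetic with b^(L-1) < N <= b^L. *)

fun from_digits :: "nat \<Rightarrow> nat list \<Rightarrow> nat" where
  "from_digits b [] = 0"
| "from_digits b (a # w) = a + b * from_digits b w"

lemma from_digits_less: "set u \<subseteq> {..<b} \<Longrightarrow> from_digits b u < b ^ length u"
proof (induction u)
  case Nil
  then show ?case by simp
next
  case (Cons a w)
  then have "a + b * from_digits b w < b * Suc (from_digits b w)" by simp
  also have "\<dots> \<le> b * b ^ length w"
    using Cons by (intro mult_le_mono2) simp
  finally show ?case by simp
qed

lemma mod_mult_eq_iff:
  fixes a b m q v :: nat
  assumes "a < b"
  shows "m mod (b * q) = a + b * v \<longleftrightarrow> a = m mod b \<and> m div b mod q = v"
proof -
  have "m mod (b * q) = m mod b + b * (m div b mod q)"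
    by (simp add: mod_mult2_eq)
  moreover have "(x + b * y) mod b = x" "(x + b * y) div b = y" if "x < b" for x y
    using that by simp_all
  ultimately show ?thesis
    using assms by (metis mod_less_divisor gr_implies_not0 zero_less_iff_neq_zero)
qed

lemma eps_le_1: "eps j a \<le> 1"
  by (simp add: eps_def)

lemma eps_1: "eps 1 a = a mod 2"
  by (simp add: eps_def)

lemma eps_Suc: "1 \<le> j \<Longrightarrow> eps (Suc j) a = eps j (a div 2)"
  by (cases j) (simp_all add: eps_def div_mult2_eq)

lemma eps_eq_iff:
  assumes "a < 2 ^ d" "a' < 2 ^ d"
  shows "(\<forall>j\<in>{1..d}. eps j a = eps j a') \<longleftrightarrow> a = a'"
  using assms
proof (induction d arbitrary: a a')
  case 0
  then show ?case by simp
next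
  case (Suc d)
  have "{1..Suc d} = insert 1 (Suc ` {1..d})"
    by (auto simp: image_Suc_atLeastAtMost)
  then have "(\<forall>j\<in>{1..Suc d}. eps j a = eps j a') \<longleftrightarrow>
        eps 1 a = eps 1 a' \<and> (\<forall>j\<in>{1..d}. eps (Suc j) a = eps (Suc j) a')"
    by (simp del: image_Suc_atLeastAtMost)
  also have "\<dots> \<longleftrightarrow> a mod 2 = a' mod 2 \<and> (\<forall>j\<in>{1..d}. eps j (a div 2) = eps j (a' div 2))"
    using eps_1[of a] eps_1[of a'] by (simp add: eps_Suc)
  also have "\<dots> \<longleftrightarrow> a mod 2 = a' mod 2 \<and> a div 2 = a' div 2"
    using Suc.IH[of "a div 2" "a' div 2"] Suc.prems by simp
  also have "\<dots> \<longleftrightarrow> a = a'"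
    by (metis div_mult_mod_eq)
  finally show ?case .
qed

lemma xseq_Suc_eq_sum_lessThan:
  assumes "0 < d" "m < (2 ^ d) ^ K"
  shows "xseq d (Suc m) j = (\<Sum>k<K. real (eps j (digit (2 ^ d) k m)) / 2 ^ (k + 1))"
  unfolding xseq_def diff_Suc_1
proof (rule sum.mono_neutral_left)
  show "{k. digit (2 ^ d) k m \<noteq> 0} \<subseteq> {..<K}"
  proof (intro subsetI, rule ccontr)
    fix k assume "k \<in> {k. digit (2 ^ d) k m \<noteq> 0}" "k \<notin> {..<K}"
    moreover have "(2 ^ d) ^ K \<le> ((2::nat) ^ d) ^ k"
      using \<open>k \<notin> {..<K}\<close> by (intro power_increasing) simp_all
    ultimately show False
      using assms(2) by (simp add: digit_def)
  qed
qed (simp_all add: eps_def)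

lemma digit_Suc: "digit b (Suc k) m = digit b k (m div b)"
  by (simp add: digit_def div_mult2_eq)

lemma xseq_Suc_rec:
  assumes "0 < d"
  shows "xseq d (Suc m) j = real (eps j (m mod 2 ^ d)) / 2 + xseq d (Suc (m div 2 ^ d)) j / 2"
proof -
  let ?b = "(2::nat) ^ d"
  have "Suc m < ?b ^ Suc m"
    by (rule power_gt_expt) (use assms one_less_power[of "2::nat" d] in simp)
  then have m: "m < ?b ^ Suc m" and m_div: "m div ?b < ?b ^ m"
    by (simp_all add: div_less_iff_less_mult mult.commute)
  have "xseq d (Suc m) j = (\<Sum>k<Suc m. real (eps j (digit ?b k m)) / 2 ^ (k + 1))"
    using xseq_Suc_eq_sum_lessThan[OF assms m] .
  also have "\<dots> = real (eps j (digit ?b 0 m)) / 2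
      + (\<Sum>k<m. real (eps j (digit ?b k (m div ?b))) / 2 ^ (k + 1)) / 2"
    by (simp add: sum.lessThan_Suc_shift digit_Suc sum_divide_distrib del: sum.lessThan_Suc)
  also have "(\<Sum>k<m. real (eps j (digit ?b k (m div ?b))) / 2 ^ (k + 1)) = xseq d (Suc (m div ?b)) j"
    using xseq_Suc_eq_sum_lessThan[OF assms m_div] by simp
  finally show ?thesis by (simp add: digit_def)
qed

lemma xseq_Suc_bounds:
  assumes "0 < d"
  shows "0 \<le> xseq d (Suc m) j \<and> xseq d (Suc m) j < 1"
proof (induction m rule: less_induct)
  case (less m)
  show ?case
  proof (cases "m = 0")
    case True
    then show ?thesis by (simp add: xseq_def digit_def)
  next
    case False
    have "m div 2 ^ d < m"
      using False by (intro div_less_dividend) (use assms one_less_power[of "2::nat" d] in simp_all)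
    moreover have "real (eps j (m mod 2 ^ d)) \<le> 1"
      using eps_le_1 by simp
    ultimately show ?thesis
      using less.IH[of "m div 2 ^ d"] xseq_Suc_rec[OF assms, of m j] by simp
  qed
qed

lemma cube_lo_Cons: "cube_lo (a # w) j = real (eps j a) / 2 + cube_lo w j / 2"
  unfolding cube_lo_def length_Cons sum.lessThan_Suc_shift
  by (simp add: sum_divide_distrib del: sum.lessThan_Suc)

lemma cube_lo_nonneg: "0 \<le> cube_lo w j"
  unfolding cube_lo_def by (intro sum_nonneg) simp

lemma cube_lo_add_side_le_1: "cube_lo w j + 1 / 2 ^ length w \<le> 1"
proof (induction w)
  case Nil
  then show ?case by (simp add: cube_lo_def)
next
  case (Cons a w)
  have "real (eps j a) \<le> 1" using eps_le_1 by simp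
  then show ?case using Cons by (simp add: cube_lo_Cons)
qed

lemma halves_interval_iff:
  fixes e e' :: nat and lo y t :: real
  assumes "e \<le> 1" "e' \<le> 1" "0 \<le> y" "y < 1" "0 \<le> lo" "0 < t" "lo + t \<le> 1"
  shows "(e + lo) / 2 \<le> (e' + y) / 2 \<and> (e' + y) / 2 < (e + lo) / 2 + t / 2
     \<longleftrightarrow> e = e' \<and> lo \<le> y \<and> y < lo + t"
proof -
  have "e = 0 \<or> e = 1" "e' = 0 \<or> e' = 1" using assms by auto
  then show ?thesis using assms by (elim disjE) (auto simp: field_simps)
qed

lemma in_cube_xseq_iff:
  assumes "0 < d" "set u \<subseteq> {..<2 ^ d}"
  shows "in_cube d u (xseq d (Suc m)) \<longleftrightarrow> m mod (2 ^ d) ^ length u = from_digits (2 ^ d) u"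
  using assms(2)
proof (induction u arbitrary: m)
  case Nil
  then show ?case using xseq_Suc_bounds[OF assms(1)] by (simp add: in_cube_def cube_lo_def)
next
  case (Cons a w)
  let ?b = "(2::nat) ^ d" and ?m' = "m div 2 ^ d"
  have a: "a < ?b" and w: "set w \<subseteq> {..<?b}" using Cons.prems by auto
  have "in_cube d (a # w) (xseq d (Suc m)) \<longleftrightarrow>
     (\<forall>j\<in>{1..d}. eps j a = eps j (m mod ?b) \<and> cube_lo w j \<le> xseq d (Suc ?m') j
        \<and> xseq d (Suc ?m') j < cube_lo w j + 1 / 2 ^ length w)"
    unfolding in_cube_def
  proof (intro ball_cong refl)
    fix j
    show "(cube_lo (a # w) j \<le> xseq d (Suc m) j
           \<and> xseq d (Suc m) j < cube_lo (a # w) j + 1 / 2 ^ length (a # w)) \<longleftrightarrow>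
         (eps j a = eps j (m mod ?b) \<and> cube_lo w j \<le> xseq d (Suc ?m') j
           \<and> xseq d (Suc ?m') j < cube_lo w j + 1 / 2 ^ length w)"
      using halves_interval_iff[of "eps j a" "eps j (m mod ?b)" "xseq d (Suc ?m') j"
          "cube_lo w j" "1 / 2 ^ length w"]
        eps_le_1 xseq_Suc_bounds[OF assms(1)] cube_lo_nonneg cube_lo_add_side_le_1
      by (simp add: cube_lo_Cons xseq_Suc_rec[OF assms(1), of m] add_divide_distrib mult.commute)
  qed
  also have "\<dots> \<longleftrightarrow> (\<forall>j\<in>{1..d}. eps j a = eps j (m mod ?b)) \<and> in_cube d w (xseq d (Suc ?m'))"
    unfolding in_cube_def by auto
  also have "\<dots> \<longleftrightarrow> a = m mod ?b \<and> ?m' mod ?b ^ length w = from_digits ?b w"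
    using eps_eq_iff[of a d "m mod ?b"] a Cons.IH[OF w] by simp
  also have "\<dots> \<longleftrightarrow> m mod ?b ^ length (a # w) = from_digits ?b (a # w)"
    using mod_mult_eq_iff[OF a] by simp
  finally show ?case .
qed

lemma card_residue_class_lessThan:
  fixes q v N :: nat
  assumes "v < q"
  shows "card {m. m < N \<and> m mod q = v} = N div q + (if v < N mod q then 1 else 0)"
proof (induction N)
  case 0
  then show ?case by simp
next
  case (Suc N)
  have "{m. m < Suc N \<and> m mod q = v} =
      (if N mod q = v then insert N {m. m < N \<and> m mod q = v} else {m. m < N \<and> m mod q = v})"
    by (auto simp: less_Suc_eq)
  then have "card {m. m < Suc N \<and> m mod q = v}
      = card {m. m < N \<and> m mod q = v} + (if N mod q = v then 1 else 0)"
    by simp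
  moreover have "N mod q < q" using assms by simp
  ultimately show ?case
    unfolding Suc.IH using assms by (auto simp: mod_Suc div_Suc)
qed

lemma ceiling_divide_of_nat_eq:
  fixes N q :: nat
  assumes "0 < q"
  shows "\<lceil>real N / real q\<rceil> = int (N div q) + (if q dvd N then 0 else 1)"
proof -
  have split: "real N / real q = real (N div q) + real (N mod q) / real q"
    using assms by (simp add: field_simps flip: of_nat_mult of_nat_add)
  have "real (N mod q) / real q < 1" using assms by simp
  then show ?thesis
    unfolding split using assms by (auto simp: ceiling_eq_iff dvd_eq_mod_eq_0)
qed

lemma M_eq:
  assumes "0 < d" "set u \<subseteq> {..<2 ^ d}"
  defines "q \<equiv> (2 ^ d) ^ length u"
  shows "M d N u = N div q + (if from_digits (2 ^ d) u < N mod q then 1 else 0)"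
proof -
  have "{n \<in> {1..N}. in_cube d u (xseq d n)} = Suc ` {m. m < N \<and> m mod q = from_digits (2 ^ d) u}"
  proof (intro set_eqI iffI)
    fix n assume "n \<in> {n \<in> {1..N}. in_cube d u (xseq d n)}"
    then show "n \<in> Suc ` {m. m < N \<and> m mod q = from_digits (2 ^ d) u}"
      using in_cube_xseq_iff[OF assms(1,2), of "n - 1"] unfolding q_def
      by (intro image_eqI[of n Suc "n - 1"]) auto
  qed (use in_cube_xseq_iff[OF assms(1,2)] q_def in auto)
  then have "M d N u = card {m. m < N \<and> m mod q = from_digits (2 ^ d) u}"
    unfolding M_def by (simp add: card_image)
  then show ?thesis
    using card_residue_class_lessThan from_digits_less[OF assms(2)] unfolding q_def by simp
qed

lemma M_floor_ceiling_bounds: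
  assumes "0 < d" "set u \<subseteq> {..<2 ^ d}"
  shows "\<lfloor>real N / real (2 ^ d) ^ length u\<rfloor> \<le> int (M d N u)"
    and "int (M d N u) \<le> \<lceil>real N / real (2 ^ d) ^ length u\<rceil>"
  using M_eq[OF assms, of N] ceiling_divide_of_nat_eq[of "(2 ^ d) ^ length u" N]
    floor_divide_of_nat_eq[where 'a=real, of N "(2 ^ d) ^ length u"]
  by (auto simp: dvd_eq_mod_eq_0 simp flip: of_nat_power)

lemma Least_power_ge:
  fixes b N :: nat
  assumes "2 \<le> b"
  defines "L \<equiv> LEAST l. N \<le> b ^ l"
  shows "N \<le> b ^ L" and "0 < L \<Longrightarrow> b ^ (L - 1) < N"
proof -
  have "N \<le> b ^ N"
    using power_gt_expt[of b N] assms by simp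
  then show "N \<le> b ^ L"
    unfolding L_def by (rule LeastI)
  show "b ^ (L - 1) < N" if "0 < L"
    using not_less_Least[of "L - 1" "\<lambda>l. N \<le> b ^ l"] that unfolding L_def by simp
qed

lemma two_power_powr_minus_inverse:
  assumes "0 < d"
  shows "real ((2::nat) ^ (d * k)) powr (- 1 / real d) = (1/2) ^ k"
proof -
  have "real ((2::nat) ^ (d * k)) = 2 powr real (d * k)"
    using powr_realpow[of 2 "d * k"] by simp
  then show ?thesis
    using assms by (simp add: powr_powr powr_minus_divide powr_realpow power_one_over)
qed

lemma powr_minus_inverse_Least_power_bounds:
  fixes d N :: nat
  assumes "0 < d" "1 \<le> N"
  defines "L \<equiv> LEAST l. N \<le> (2 ^ d) ^ l"
  shows "(1/2) ^ L \<le> real N powr (- 1 / real d)"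
    and "real N powr (- 1 / real d) \<le> 2 * (1/2) ^ L"
proof -
  have b: "2 \<le> (2::nat) ^ d"
    using assms(1) by (simp add: self_le_power)
  have upper: "N \<le> (2 ^ d) ^ L" and lower: "0 < L \<Longrightarrow> (2 ^ d) ^ (L - 1) < N"
    using Least_power_ge[OF b, of N] unfolding L_def by auto
  have pow_powr: "real (((2::nat) ^ d) ^ k) powr (- 1 / real d) = (1/2) ^ k" for k
    unfolding power_mult[symmetric] by (rule two_power_powr_minus_inverse[OF assms(1)])
  have "(1/2) ^ L = real ((2 ^ d) ^ L) powr (- 1 / real d)"
    by (rule pow_powr[symmetric])
  also have "\<dots> \<le> real N powr (- 1 / real d)"
    using upper assms(2) by (intro powr_mono2') (simp_all only: of_nat_le_iff, auto)
  finally show "(1/2) ^ L \<le> real N powr (- 1 / real d)" .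
  show "real N powr (- 1 / real d) \<le> 2 * (1/2) ^ L"
  proof (cases "L = 0")
    case True
    then have "N = 1" using upper assms(2) by simp
    then show ?thesis using True by simp
  next
    case False
    have "real N powr (- 1 / real d) \<le> real ((2 ^ d) ^ (L - 1)) powr (- 1 / real d)"
      using lower False by (intro powr_mono2') (simp_all only: of_nat_le_iff, auto)
    also have "\<dots> = (1/2) ^ (L - 1)"
      by (rule pow_powr)
    also have "\<dots> = 2 * (1/2) ^ L"
      using False by (cases L) simp_all
    finally show ?thesis .
  qed
qed

lemma M_ge_base:
  assumes "0 < d" "(2 ^ d) ^ 2 < N" "length u = (LEAST l. N \<le> (2 ^ d) ^ l) - 2"
    and "set u \<subseteq> {..<2 ^ d}"
  shows "2 ^ d \<le> M d N u"
proof -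
  let ?b = "(2::nat) ^ d" and ?L = "LEAST l. N \<le> (2 ^ d) ^ l"
  have b: "2 \<le> ?b"
    using assms(1) by (simp add: self_le_power)
  have "1 < ?b"
    using b by linarith
  moreover have "?b ^ 2 < ?b ^ ?L"
    using assms(2) Least_power_ge(1)[OF b, of N] by (rule less_le_trans)
  ultimately have "2 < ?L"
    by (rule power_less_imp_less_exp)
  then have "?L - 1 = Suc (length u)"
    using assms(3) by simp
  then have "?b * ?b ^ length u < N"
    using Least_power_ge(2)[OF b, of N] \<open>2 < ?L\<close> by (simp only: power_Suc)
  then have "?b \<le> N div ?b ^ length u"
    using b by (simp add: less_eq_div_iff_mult_less_eq mult.commute)
  also have "\<dots> \<le> M d N u"
    using M_eq[OF assms(1,4), of N] by simp
  finally show ?thesis .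
qed

theorem lemma2p6:
  fixes d N :: nat
  assumes "d \<ge> 2" and "N \<ge> 1"
  defines "b \<equiv> (2::nat) ^ d"
  defines "L \<equiv> (LEAST l::nat. b ^ l \<ge> N)"
  shows "((1/2::real) ^ L \<le> real N powr (- 1 / real d) \<and>
         real N powr (- 1 / real d) \<le> 2 * (1/2::real) ^ L) \<and>
        (\<forall>l u. l + 2 \<le> L \<longrightarrow> length u = l \<longrightarrow> set u \<subseteq> {..<b} \<longrightarrow>
           \<lfloor>real N / real b ^ l\<rfloor> \<le> int (M d N u) \<and>
           int (M d N u) \<le> \<lceil>real N / real b ^ l\<rceil>) \<and>
        (N > b ^ 2 \<longrightarrow>
           (\<forall>u. length u = L - 2 \<longrightarrow> set u \<subseteq> {..<b} \<longrightarrow> M d N u \<ge> b))"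
proof -
  have d: "0 < d" using assms(1) by simp
  show ?thesis
    unfolding b_def L_def
  proof (intro conjI allI impI)
    show "(1/2) ^ (LEAST l. N \<le> (2 ^ d) ^ l) \<le> real N powr (- 1 / real d)"
      and "real N powr (- 1 / real d) \<le> 2 * (1/2) ^ (LEAST l. N \<le> (2 ^ d) ^ l)"
      using powr_minus_inverse_Least_power_bounds[OF d assms(2)] by simp_all
  next
    fix l u assume "length u = l" "set u \<subseteq> {..<(2::nat) ^ d}"
    then show "\<lfloor>real N / real (2 ^ d) ^ l\<rfloor> \<le> int (M d N u)"
      and "int (M d N u) \<le> \<lceil>real N / real (2 ^ d) ^ l\<rceil>"
      using M_floor_ceiling_bounds[OF d] by blast+
  next
    fix u assume "(2 ^ d) ^ 2 < N" "length u = (LEAST l. N \<le> (2 ^ d) ^ l) - 2"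
      "set u \<subseteq> {..<(2::nat) ^ d}"
    then show "2 ^ d \<le> M d N u"
      by (rule M_ge_base[OF d])
  qed
qed

end
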